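(* Consider the GTFG system with $\lambda=0$ (setting below) and the invariant set $\mathcal M_1=\{\xi_1=0,\ \xi_2=0\}\subset\mathcal P^6$, where $\xi_1=w_1^2+\varepsilon_0x_1-\mathrm i\varepsilon_1(x_1w_3-2z_1w_1)-\varepsilon_1^2r^2$, $\xi_2=w_2^2+\varepsilon_0x_2+\mathrm i\varepsilon_1(x_2w_3-2z_2w_2)-\varepsilon_1^2r^2$ (so that $K=\xi_1\xi_2$). Let $$N=\sqrt{[\varepsilon_0+\mathrm i\varepsilon_1(w_3+\mathrm i\varepsilon_1y_1)][\varepsilon_0-\mathrm i\varepsilon_1(w_3-\mathrm i\varepsilon_1y_2)]}+\varepsilon_1^2\sqrt{x_1x_2},$$ $$F=\sqrt{x_1x_2}\,w_3-\frac{x_2z_1w_1+x_1z_2w_2}{\sqrt{x_1x_2}}+\mathrm i\varepsilon_1r^2\frac{x_1-x_2}{\sqrt{x_1x_2}}.$$ Then the points of $\mathcal M_1$ have outer type "center", except for the points with $N\,F=0$, which are degenerate with respect to the whole system on $\mathcal P^6$. (Here, with $\Phi=K$, one has $C_\Phi=-4N^2F^2$.)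
   Context: Phase variables $\mathbf M,\boldsymbol\alpha,\boldsymbol\beta\in\mathbb R^3$ on $e(3,2)^*\cong\mathbb R^9$ with Lie–Poisson dynamics: a function $\Phi$ generates the vector field $\mathrm{sgrad}\,\Phi$: $\dot{\mathbf M}=\mathbf M\times\partial\Phi/\partial\mathbf M+\boldsymbol\alpha\times\partial\Phi/\partial\boldsymbol\alpha+\boldsymbol\beta\times\partial\Phi/\partial\boldsymbol\beta$, $\dot{\boldsymbol\alpha}=\boldsymbol\alpha\times\partial\Phi/\partial\mathbf M$, $\dot{\boldsymbol\beta}=\boldsymbol\beta\times\partial\Phi/\partial\mathbf M$. Constants $a>b>0$, $r^2=a^2-b^2$; phase space $\mathcal P^6=\{\boldsymbol\alpha^2=a^2,\boldsymbol\beta^2=b^2,\boldsymbol\alpha\cdot\boldsymbol\beta=0\}$. Real parameters $\varepsilon_0\ge0,\varepsilon_1,\lambda$. GTFG Hamiltonian $H=\tfrac14(M_1^2+M_2^2)+\tfrac12(M_3-\lambda)^2-\varepsilon_1[(\alpha_2M_3-\alpha_3M_2)+(\beta_3M_1-\beta_1M_3)]-\varepsilon_0(\alpha_1+\beta_2)$. Complex variables: $x_{1,2}=(\alpha_1-\beta_2)\pm\mathrm i(\alpha_2+\beta_1)$, $y_{1,2}=(\alpha_1+\beta_2)\pm\mathrm i(\alpha_2-\beta_1)$, $z_{1,2}=\alpha_3\pm\mathrm i\beta_3$, $w_{1,2}=\tfrac12(M_1\pm\mathrm iM_2)$, $w_3=M_3-\lambda$. Both square roots in $N$ are of nonnegative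 real numbers (the first radicand is $|\cdot|^2$, $x_1x_2=|x_1|^2$) and are taken nonnegative. With $\lambda=0$ the function $K=\xi_1\xi_2$ is a first integral of the GTFG system, and $\mathcal M_1=\{K=0,dK=0\}$. Outer type: for a critical subsystem $\mathcal M$ given as $\{\Phi=0,\ d\Phi=0\}$ for a first integral $\Phi$ (here $\Phi=K$), each $x\in\mathcal M$ is a zero of $\mathrm{sgrad}\,\Phi$; let $A_\Phi$ be its linearization at $x$ (a linear operator on $\mathbb R^9$). Its characteristic polynomial has the form $-\mu^7(\mu^2-C_\Phi)$, $C_\Phi=\tfrac12\operatorname{tr}(A_\Phi^2)$. The outer type of $x$ is "center" if $C_\Phi<0$, "saddle" if $C_\Phi>0$, and $x$ is degenerate if $C_\Phi=0$. *)

theory Defs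
  imports "HOL-Analysis.Analysis"
begin

text \<open>Phase variables (M, alpha, beta) in e(3,2)^* = R^9, modelled as R^3 x R^3 x R^3.\<close>
type_synonym phase = "(real^3) \<times> (real^3) \<times> (real^3)"

definition dM :: "(phase \<Rightarrow> real) \<Rightarrow> phase \<Rightarrow> real^3" where
  "dM \<Phi> p = (\<chi> i. frechet_derivative \<Phi> (at p) (axis i 1, 0, 0))"
definition dAlpha :: "(phase \<Rightarrow> real) \<Rightarrow> phase \<Rightarrow> real^3" where
  "dAlpha \<Phi> p = (\<chi> i. frechet_derivative \<Phi> (at p) (0, axis i 1, 0))"
definition dBeta :: "(phase \<Rightarrow> real) \<Rightarrow> phase \<Rightarrow> real^3" where
  "dBeta \<Phi> p = (\<chi> i. frechet_derivative \<Phi> (at p) (0, 0, axis i 1))"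

definition sgrad :: "(phase \<Rightarrow> real) \<Rightarrow> phase \<Rightarrow> phase" where
  "sgrad \<Phi> p = (case p of (M, \<alpha>, \<beta>) \<Rightarrow>
      (cross3 M (dM \<Phi> p) + cross3 \<alpha> (dAlpha \<Phi> p) + cross3 \<beta> (dBeta \<Phi> p),
       cross3 \<alpha> (dM \<Phi> p),
       cross3 \<beta> (dM \<Phi> p)))"

definition P6 :: "real \<Rightarrow> real \<Rightarrow> phase set" where
  "P6 a b = {(M, \<alpha>, \<beta>). \<alpha> \<bullet> \<alpha> = a\<^sup>2 \<and> \<beta> \<bullet> \<beta> = b\<^sup>2 \<and> \<alpha> \<bullet> \<beta> = 0}"

definition cx1 :: "phase \<Rightarrow> complex" where
  "cx1 p = (case p of (M, \<alpha>, \<beta>) \<Rightarrow> Complex (\<alpha>$1 - \<beta>$2) (\<alpha>$2 + \<beta>$1))"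
definition cx2 :: "phase \<Rightarrow> complex" where
  "cx2 p = (case p of (M, \<alpha>, \<beta>) \<Rightarrow> Complex (\<alpha>$1 - \<beta>$2) (- (\<alpha>$2 + \<beta>$1)))"
definition cy1 :: "phase \<Rightarrow> complex" where
  "cy1 p = (case p of (M, \<alpha>, \<beta>) \<Rightarrow> Complex (\<alpha>$1 + \<beta>$2) (\<alpha>$2 - \<beta>$1))"
definition cy2 :: "phase \<Rightarrow> complex" where
  "cy2 p = (case p of (M, \<alpha>, \<beta>) \<Rightarrow> Complex (\<alpha>$1 + \<beta>$2) (- (\<alpha>$2 - \<beta>$1)))"
definition cz1 :: "phase \<Rightarrow> complex" where
  "cz1 p = (case p of (M, \<alpha>, \<beta>) \<Rightarrow> Complex (\<alpha>$3) (\<beta>$3))"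
definition cz2 :: "phase \<Rightarrow> complex" where
  "cz2 p = (case p of (M, \<alpha>, \<beta>) \<Rightarrow> Complex (\<alpha>$3) (- \<beta>$3))"
definition cw1 :: "phase \<Rightarrow> complex" where
  "cw1 p = (case p of (M, \<alpha>, \<beta>) \<Rightarrow> Complex (M$1 / 2) (M$2 / 2))"
definition cw2 :: "phase \<Rightarrow> complex" where
  "cw2 p = (case p of (M, \<alpha>, \<beta>) \<Rightarrow> Complex (M$1 / 2) (- M$2 / 2))"
definition cw3 :: "real \<Rightarrow> phase \<Rightarrow> complex" where
  "cw3 lam p = (case p of (M, \<alpha>, \<beta>) \<Rightarrow> complex_of_real (M$3 - lam))"

definition rsq :: "real \<Rightarrow> real \<Rightarrow> real" where
  "rsq a b = a\<^sup>2 - b\<^sup>2"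

definition xi1 :: "real \<Rightarrow> real \<Rightarrow> real \<Rightarrow> real \<Rightarrow> real \<Rightarrow> phase \<Rightarrow> complex" where
  "xi1 a b \<epsilon>0 \<epsilon>1 lam p = (cw1 p)\<^sup>2 + of_real \<epsilon>0 * cx1 p
     - \<i> * of_real \<epsilon>1 * (cx1 p * cw3 lam p - 2 * cz1 p * cw1 p) - of_real (\<epsilon>1\<^sup>2 * rsq a b)"
definition xi2 :: "real \<Rightarrow> real \<Rightarrow> real \<Rightarrow> real \<Rightarrow> real \<Rightarrow> phase \<Rightarrow> complex" where
  "xi2 a b \<epsilon>0 \<epsilon>1 lam p = (cw2 p)\<^sup>2 + of_real \<epsilon>0 * cx2 p
     + \<i> * of_real \<epsilon>1 * (cx2 p * cw3 lam p - 2 * cz2 p * cw2 p) - of_real (\<epsilon>1\<^sup>2 * rsq a b)"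

text \<open>K = xi1 * xi2 (a real-valued function on R^9; we take the real part of the
  complex product, which has zero imaginary part since xi2 is the conjugate of xi1).\<close>
definition Kfun :: "real \<Rightarrow> real \<Rightarrow> real \<Rightarrow> real \<Rightarrow> real \<Rightarrow> phase \<Rightarrow> real" where
  "Kfun a b \<epsilon>0 \<epsilon>1 lam p = Re (xi1 a b \<epsilon>0 \<epsilon>1 lam p * xi2 a b \<epsilon>0 \<epsilon>1 lam p)"

definition M1set :: "real \<Rightarrow> real \<Rightarrow> real \<Rightarrow> real \<Rightarrow> real \<Rightarrow> phase set" where
  "M1set a b \<epsilon>0 \<epsilon>1 lam = {p \<in> P6 a b. xi1 a b \<epsilon>0 \<epsilon>1 lam p = 0 \<and> xi2 a b \<epsilon>0 \<epsilon>1 lam p = 0}"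

definition trace_op :: "('a::euclidean_space \<Rightarrow> 'a) \<Rightarrow> real" where
  "trace_op A = (\<Sum>e\<in>Basis. A e \<bullet> e)"

definition linz :: "(phase \<Rightarrow> real) \<Rightarrow> phase \<Rightarrow> phase \<Rightarrow> phase" where
  "linz \<Phi> x = frechet_derivative (sgrad \<Phi>) (at x)"
definition Cinv :: "(phase \<Rightarrow> real) \<Rightarrow> phase \<Rightarrow> real" where
  "Cinv \<Phi> x = trace_op (linz \<Phi> x \<circ> linz \<Phi> x) / 2"

definition outer_center :: "(phase \<Rightarrow> real) \<Rightarrow> phase \<Rightarrow> bool" where
  "outer_center \<Phi> x \<longleftrightarrow> Cinv \<Phi> x < 0"
definition outer_saddle :: "(phase \<Rightarrow> real) \<Rightarrow> phase \<Rightarrow> bool" where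
  "outer_saddle \<Phi> x \<longleftrightarrow> Cinv \<Phi> x > 0"
definition outer_degenerate :: "(phase \<Rightarrow> real) \<Rightarrow> phase \<Rightarrow> bool" where
  "outer_degenerate \<Phi> x \<longleftrightarrow> Cinv \<Phi> x = 0"

text \<open>The functions N and F (square roots of nonnegative reals, taken nonnegative;
  the radicands are real, so we take their real parts).\<close>
definition Nfun :: "real \<Rightarrow> real \<Rightarrow> real \<Rightarrow> phase \<Rightarrow> complex" where
  "Nfun \<epsilon>0 \<epsilon>1 lam p =
     of_real (sqrt (Re ((of_real \<epsilon>0 + \<i> * of_real \<epsilon>1 * (cw3 lam p + \<i> * of_real \<epsilon>1 * cy1 p))
                      * (of_real \<epsilon>0 - \<i> * of_real \<epsilon>1 * (cw3 lam p - \<i> * of_real \<epsilon>1 * cy2 p)))))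
     + of_real (\<epsilon>1\<^sup>2) * of_real (sqrt (Re (cx1 p * cx2 p)))"
definition Ffun :: "real \<Rightarrow> real \<Rightarrow> real \<Rightarrow> real \<Rightarrow> phase \<Rightarrow> complex" where
  "Ffun a b \<epsilon>1 lam p =
     (let s = complex_of_real (sqrt (Re (cx1 p * cx2 p))) in
      s * cw3 lam p - (cx2 p * cz1 p * cw1 p + cx1 p * cz2 p * cw2 p) / s
      + \<i> * of_real \<epsilon>1 * of_real (rsq a b) * (cx1 p - cx2 p) / s)"

end

theory Submission
  imports Defs
begin

text \<open>Write \<xi>1 = u + \<i> v, so that K = u^2 + v^2. At a common zero of u and v the linearization
  of sgrad K is h \<mapsto> 2 (\<nabla>u \<bullet> h) X_u + 2 (\<nabla>v \<bullet> h) X_v with X_f = sgrad f. This operator has rank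
  two, and since \<nabla>f \<bullet> X_f = 0 and \<nabla>u \<bullet> X_v = - \<nabla>v \<bullet> X_u its square has trace -8 {u,v}^2, where
  {u,v} = \<nabla>v \<bullet> X_u. Hence C_K = -4 {u,v}^2.

  On P6 one has \<xi>1 = \<omega>^2 + x1 (cnj q) with \<omega> = w1 + \<i> \<epsilon>1 z1 and q = \<epsilon>0 + \<i> \<epsilon>1 (w3 + \<i> \<epsilon>1 y1),
  the first factor under the square root in N. On M1 therefore \<omega>^2 = - x1 (cnj q), whence
  |x1| |q| = |\<omega>|^2. Expressing {u,v} and \<surd>(x1 x2) F through \<omega>, x1, q and z1 and substituting
  \<omega>^2 = - x1 (cnj q) gives {u,v} |x1|^2 = (|\<omega>|^2 + \<epsilon>1^2 |x1|^2) \<surd>(x1 x2) F = |x1|^2 N F.\<close>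

lemma trace_op_rank_one:
  fixes g X :: "'a::euclidean_space"
  shows "trace_op (\<lambda>h. (g \<bullet> h) *\<^sub>R X) = g \<bullet> X"
  by (simp add: trace_op_def euclidean_inner[of g X] mult.commute)

lemma trace_op_add:
  fixes A B :: "'a::euclidean_space \<Rightarrow> 'a"
  shows "trace_op (\<lambda>h. A h + B h) = trace_op A + trace_op B"
  by (simp add: trace_op_def inner_add_left sum.distrib)

lemma trace_op_square_rank_two:
  fixes g1 g2 X1 X2 :: "'a::euclidean_space"
  defines "A \<equiv> \<lambda>h. (g1 \<bullet> h) *\<^sub>R X1 + (g2 \<bullet> h) *\<^sub>R X2"
  shows "trace_op (A \<circ> A) = (g1 \<bullet> X1)\<^sup>2 + 2 * (g1 \<bullet> X2) * (g2 \<bullet> X1) + (g2 \<bullet> X2)\<^sup>2"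
proof -
  have "A \<circ> A = (\<lambda>h. (((g1 \<bullet> X1) *\<^sub>R g1 + (g1 \<bullet> X2) *\<^sub>R g2) \<bullet> h) *\<^sub>R X1
                   + (((g2 \<bullet> X1) *\<^sub>R g1 + (g2 \<bullet> X2) *\<^sub>R g2) \<bullet> h) *\<^sub>R X2)"
    by (simp add: A_def fun_eq_iff inner_add_left inner_add_right algebra_simps)
  then have "trace_op (A \<circ> A) = ((g1 \<bullet> X1) *\<^sub>R g1 + (g1 \<bullet> X2) *\<^sub>R g2) \<bullet> X1
                               + ((g2 \<bullet> X1) *\<^sub>R g1 + (g2 \<bullet> X2) *\<^sub>R g2) \<bullet> X2"
    by (simp only: trace_op_add trace_op_rank_one)
  then show ?thesis
    by (simp add: inner_add_right power2_eq_square inner_commute algebra_simps)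
qed

definition lie_poisson :: "phase \<Rightarrow> phase \<Rightarrow> phase" where
  "lie_poisson p g = (case p of (M, \<alpha>, \<beta>) \<Rightarrow> case g of (gM, g\<alpha>, g\<beta>) \<Rightarrow>
     (cross3 M gM + cross3 \<alpha> g\<alpha> + cross3 \<beta> g\<beta>, cross3 \<alpha> gM, cross3 \<beta> gM))"

lemma partial_gradients_eq:
  assumes "(\<Phi> has_derivative (\<lambda>h. G \<bullet> h)) (at p)"
  shows "(dM \<Phi> p, dAlpha \<Phi> p, dBeta \<Phi> p) = G"
proof -
  have "frechet_derivative \<Phi> (at p) = (\<lambda>h. G \<bullet> h)"
    using assms by (rule frechet_derivative_at[symmetric])
  then show ?thesis
    by (simp add: dM_def dAlpha_def dBeta_def inner_prod_def inner_axis vec_eq_iff prod_eq_iff)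
qed

lemma sgrad_eq_lie_poisson:
  assumes "(\<Phi> has_derivative (\<lambda>h. G \<bullet> h)) (at p)"
  shows "sgrad \<Phi> p = lie_poisson p G"
  using partial_gradients_eq[OF assms] by (auto simp: sgrad_def lie_poisson_def split: prod.splits)

lemma bounded_bilinear_lie_poisson: "bounded_bilinear lie_poisson"
proof -
  have "bilinear lie_poisson"
    unfolding bilinear_def
    by (auto intro!: linearI simp: lie_poisson_def cross_add_left cross_add_right cross_mult_left
        cross_mult_right scaleR_right_distrib split: prod.splits)
  then show ?thesis
    by (simp add: bilinear_conv_bounded_bilinear)
qed

lemma inner_lie_poisson_commute: "h \<bullet> lie_poisson p g = - (g \<bullet> lie_poisson p h)"
  by (simp add: lie_poisson_def cross3_simps split: prod.splits)

lemma inner_lie_poisson_self: "g \<bullet> lie_poisson p g = 0"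
  using inner_lie_poisson_commute[of g p g] by simp

lemma Cinv_sum_of_squares:
  fixes u v :: "phase \<Rightarrow> real" and gu gv :: "phase \<Rightarrow> phase"
  assumes du: "\<And>p. (u has_derivative (\<lambda>h. gu p \<bullet> h)) (at p)"
    and dv: "\<And>p. (v has_derivative (\<lambda>h. gv p \<bullet> h)) (at p)"
    and "gu differentiable at x" "gv differentiable at x"
    and "u x = 0" "v x = 0"
  shows "Cinv (\<lambda>p. (u p)\<^sup>2 + (v p)\<^sup>2) x = - 4 * (gv x \<bullet> lie_poisson x (gu x))\<^sup>2"
proof -
  let ?\<Phi> = "\<lambda>p. (u p)\<^sup>2 + (v p)\<^sup>2"
  let ?Xu = "\<lambda>p. lie_poisson p (gu p)" and ?Xv = "\<lambda>p. lie_poisson p (gv p)"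
  note lp = bounded_bilinear_lie_poisson
  have "(?\<Phi> has_derivative (\<lambda>h. ((2 * u p) *\<^sub>R gu p + (2 * v p) *\<^sub>R gv p) \<bullet> h)) (at p)" for p
    using du[of p] dv[of p]
    by (auto intro!: derivative_eq_intros simp: inner_add_left)
  from sgrad_eq_lie_poisson[OF this]
  have sgrad: "sgrad ?\<Phi> = (\<lambda>p. (2 * u p) *\<^sub>R ?Xu p + (2 * v p) *\<^sub>R ?Xv p)"
    by (simp add: fun_eq_iff bounded_bilinear.add_right[OF lp] bounded_bilinear.scaleR_right[OF lp])
  obtain Du Dv where "(?Xu has_derivative Du) (at x)" and "(?Xv has_derivative Dv) (at x)"
    using assms(3,4)
    by (auto simp: differentiable_def intro: bounded_bilinear.FDERIV[OF lp has_derivative_ident])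
  with du[of x] dv[of x] assms(5,6)
  have "(sgrad ?\<Phi> has_derivative
          (\<lambda>h. (gu x \<bullet> h) *\<^sub>R (2 *\<^sub>R ?Xu x) + (gv x \<bullet> h) *\<^sub>R (2 *\<^sub>R ?Xv x))) (at x)"
    unfolding sgrad by (auto intro!: derivative_eq_intros simp: fun_eq_iff mult.commute)
  then have linz: "linz ?\<Phi> x = (\<lambda>h. (gu x \<bullet> h) *\<^sub>R (2 *\<^sub>R ?Xu x) + (gv x \<bullet> h) *\<^sub>R (2 *\<^sub>R ?Xv x))"
    unfolding linz_def by (rule frechet_derivative_at[symmetric])
  then show ?thesis
    unfolding Cinv_def linz trace_op_square_rank_two
    by (simp add: inner_lie_poisson_commute[of "gu x" x "gv x"] inner_lie_poisson_self power2_eq_square)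
qed

lemma has_derivative_coordinates [derivative_intros]:
  "((\<lambda>p::phase. fst p $ i) has_derivative (\<lambda>h. fst h $ i)) F"
  "((\<lambda>p::phase. fst (snd p) $ i) has_derivative (\<lambda>h. fst (snd h) $ i)) F"
  "((\<lambda>p::phase. snd (snd p) $ i) has_derivative (\<lambda>h. snd (snd h) $ i)) F"
  by (auto intro!: bounded_linear_imp_has_derivative bounded_linear_compose[OF bounded_linear_vec_nth]
      bounded_linear_fst bounded_linear_snd bounded_linear_compose[OF bounded_linear_fst]
      bounded_linear_compose[OF bounded_linear_snd])

lemma has_derivative_vector3 [derivative_intros]:
  fixes f1 f2 f3 :: "'a::real_normed_vector \<Rightarrow> real"
  assumes "(f1 has_derivative f1') F" "(f2 has_derivative f2') F" "(f3 has_derivative f3') F"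
  shows "((\<lambda>x. vector [f1 x, f2 x, f3 x] :: real^3) has_derivative (\<lambda>h. vector [f1' h, f2' h, f3' h])) F"
proof -
  have vector3: "vector [s, t, u] = s *\<^sub>R axis 1 1 + t *\<^sub>R axis 2 1 + u *\<^sub>R axis (3::3) (1::real)"
    for s t u :: real
    by (simp add: vec_eq_iff forall_3 axis_def)
  show ?thesis
    unfolding vector3 by (intro derivative_intros assms)
qed

definition xi_re :: "real \<Rightarrow> real \<Rightarrow> real \<Rightarrow> real \<Rightarrow> phase \<Rightarrow> real" where
  "xi_re a b \<epsilon>0 \<epsilon>1 p = (case p of (M, \<alpha>, \<beta>) \<Rightarrow>
     ((M$1)\<^sup>2 - (M$2)\<^sup>2) / 4 + \<epsilon>0 * (\<alpha>$1 - \<beta>$2) + \<epsilon>1 * M$3 * (\<alpha>$2 + \<beta>$1)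
     - \<epsilon>1 * (\<alpha>$3 * M$2 + \<beta>$3 * M$1) - \<epsilon>1\<^sup>2 * rsq a b)"

definition xi_im :: "real \<Rightarrow> real \<Rightarrow> phase \<Rightarrow> real" where
  "xi_im \<epsilon>0 \<epsilon>1 p = (case p of (M, \<alpha>, \<beta>) \<Rightarrow>
     M$1 * M$2 / 2 + \<epsilon>0 * (\<alpha>$2 + \<beta>$1) - \<epsilon>1 * M$3 * (\<alpha>$1 - \<beta>$2) + \<epsilon>1 * (\<alpha>$3 * M$1 - \<beta>$3 * M$2))"

definition grad_xi_re :: "real \<Rightarrow> real \<Rightarrow> phase \<Rightarrow> phase" where
  "grad_xi_re \<epsilon>0 \<epsilon>1 p = (case p of (M, \<alpha>, \<beta>) \<Rightarrow>
     (vector [M$1 / 2 - \<epsilon>1 * \<beta>$3, - M$2 / 2 - \<epsilon>1 * \<alpha>$3, \<epsilon>1 * (\<alpha>$2 + \<beta>$1)],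
      vector [\<epsilon>0, \<epsilon>1 * M$3, - \<epsilon>1 * M$2],
      vector [\<epsilon>1 * M$3, - \<epsilon>0, - \<epsilon>1 * M$1]))"

definition grad_xi_im :: "real \<Rightarrow> real \<Rightarrow> phase \<Rightarrow> phase" where
  "grad_xi_im \<epsilon>0 \<epsilon>1 p = (case p of (M, \<alpha>, \<beta>) \<Rightarrow>
     (vector [M$2 / 2 + \<epsilon>1 * \<alpha>$3, M$1 / 2 - \<epsilon>1 * \<beta>$3, - \<epsilon>1 * (\<alpha>$1 - \<beta>$2)],
      vector [- \<epsilon>1 * M$3, \<epsilon>0, \<epsilon>1 * M$1],
      vector [\<epsilon>0, \<epsilon>1 * M$3, - \<epsilon>1 * M$2]))"

definition xi_bracket :: "real \<Rightarrow> real \<Rightarrow> phase \<Rightarrow> real" where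
  "xi_bracket \<epsilon>0 \<epsilon>1 p = grad_xi_im \<epsilon>0 \<epsilon>1 p \<bullet> lie_poisson p (grad_xi_re \<epsilon>0 \<epsilon>1 p)"

lemma conjugate_variables:
  "cx2 p = cnj (cx1 p)" "cy2 p = cnj (cy1 p)" "cz2 p = cnj (cz1 p)" "cw2 p = cnj (cw1 p)"
  "cnj (cw3 lam p) = cw3 lam p"
  by (simp_all add: cx1_def cx2_def cy1_def cy2_def cz1_def cz2_def cw1_def cw2_def cw3_def
      complex_eq_iff split: prod.splits)

lemma xi2_eq_cnj_xi1: "xi2 a b \<epsilon>0 \<epsilon>1 lam p = cnj (xi1 a b \<epsilon>0 \<epsilon>1 lam p)"
  by (simp add: xi1_def xi2_def conjugate_variables)

lemma xi1_eq_Complex: "xi1 a b \<epsilon>0 \<epsilon>1 0 p = Complex (xi_re a b \<epsilon>0 \<epsilon>1 p) (xi_im \<epsilon>0 \<epsilon>1 p)"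
  by (simp add: xi1_def xi_re_def xi_im_def cx1_def cz1_def cw1_def cw3_def complex_eq_iff
      power2_eq_square field_simps split: prod.splits)

lemma Kfun_eq_sum_of_squares: "Kfun a b \<epsilon>0 \<epsilon>1 0 = (\<lambda>p. (xi_re a b \<epsilon>0 \<epsilon>1 p)\<^sup>2 + (xi_im \<epsilon>0 \<epsilon>1 p)\<^sup>2)"
  by (simp add: fun_eq_iff Kfun_def xi2_eq_cnj_xi1 complex_mult_cnj xi1_eq_Complex)

lemma has_derivative_xi_re: "(xi_re a b \<epsilon>0 \<epsilon>1 has_derivative (\<lambda>h. grad_xi_re \<epsilon>0 \<epsilon>1 p \<bullet> h)) (at p)"
  unfolding xi_re_def[abs_def] grad_xi_re_def case_prod_unfold
  by (auto intro!: derivative_eq_intros simp: fun_eq_iff inner_vec_def sum_3 power2_eq_square field_simps)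

lemma has_derivative_xi_im: "(xi_im \<epsilon>0 \<epsilon>1 has_derivative (\<lambda>h. grad_xi_im \<epsilon>0 \<epsilon>1 p \<bullet> h)) (at p)"
  unfolding xi_im_def[abs_def] grad_xi_im_def case_prod_unfold
  by (auto intro!: derivative_eq_intros simp: fun_eq_iff inner_vec_def sum_3 field_simps)

lemma differentiable_grad_xi:
  "grad_xi_re \<epsilon>0 \<epsilon>1 differentiable at x" "grad_xi_im \<epsilon>0 \<epsilon>1 differentiable at x"
  unfolding grad_xi_re_def[abs_def] grad_xi_im_def[abs_def] case_prod_unfold
  by (rule differentiableI, (rule derivative_intros | simp)+)+

lemma Cinv_Kfun_eq:
  assumes "xi1 a b \<epsilon>0 \<epsilon>1 0 x = 0"
  shows "Cinv (Kfun a b \<epsilon>0 \<epsilon>1 0) x = - 4 * (xi_bracket \<epsilon>0 \<epsilon>1 x)\<^sup>2"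
proof -
  have "xi_re a b \<epsilon>0 \<epsilon>1 x = 0" "xi_im \<epsilon>0 \<epsilon>1 x = 0"
    using assms by (simp_all add: xi1_eq_Complex complex_eq_iff)
  then show ?thesis
    unfolding Kfun_eq_sum_of_squares xi_bracket_def
    by (intro Cinv_sum_of_squares has_derivative_xi_re has_derivative_xi_im differentiable_grad_xi)
qed

definition omega :: "real \<Rightarrow> phase \<Rightarrow> complex" where
  "omega \<epsilon>1 p = cw1 p + \<i> * of_real \<epsilon>1 * cz1 p"

definition N_factor :: "real \<Rightarrow> real \<Rightarrow> phase \<Rightarrow> complex" where
  "N_factor \<epsilon>0 \<epsilon>1 p = of_real \<epsilon>0 + \<i> * of_real \<epsilon>1 * (cw3 0 p + \<i> * of_real \<epsilon>1 * cy1 p)"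

definition F_numer :: "real \<Rightarrow> real \<Rightarrow> real \<Rightarrow> phase \<Rightarrow> real" where
  "F_numer a b \<epsilon>1 p = Re (cx1 p * cx2 p * cw3 0 p - (cx2 p * cz1 p * cw1 p + cx1 p * cz2 p * cw2 p)
     + \<i> * of_real \<epsilon>1 * of_real (rsq a b) * (cx1 p - cx2 p))"

lemma Nfun_eq: "Nfun \<epsilon>0 \<epsilon>1 0 p = of_real (cmod (N_factor \<epsilon>0 \<epsilon>1 p) + \<epsilon>1\<^sup>2 * cmod (cx1 p))"
proof -
  have cnj_N: "of_real \<epsilon>0 - \<i> * of_real \<epsilon>1 * (cw3 0 p - \<i> * of_real \<epsilon>1 * cy2 p) = cnj (N_factor \<epsilon>0 \<epsilon>1 p)"
    by (simp add: N_factor_def conjugate_variables)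
  show ?thesis
    unfolding Nfun_def N_factor_def[symmetric] conjugate_variables(1) cnj_N
      complex_mod_sqrt_Re_mult_cnj[symmetric]
    by simp
qed

lemma Ffun_eq: "Ffun a b \<epsilon>1 0 p = of_real (F_numer a b \<epsilon>1 p / cmod (cx1 p))"
proof -
  let ?s = "complex_of_real (cmod (cx1 p))"
  have numer: "of_real (F_numer a b \<epsilon>1 p) = cx1 p * cx2 p * cw3 0 p
      - (cx2 p * cz1 p * cw1 p + cx1 p * cz2 p * cw2 p) + \<i> * of_real \<epsilon>1 * of_real (rsq a b) * (cx1 p - cx2 p)"
    by (cases p) (simp add: F_numer_def complex_eq_iff cx1_def cx2_def cz1_def cz2_def cw1_def cw2_def
        cw3_def field_simps)
  have "?s\<^sup>2 = cx1 p * cx2 p"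
    by (simp add: complex_norm_square conjugate_variables flip: of_real_power)
  then show ?thesis
    unfolding Ffun_def Let_def conjugate_variables(1) complex_mod_sqrt_Re_mult_cnj[symmetric]
      of_real_divide numer
    by (cases "cx1 p = 0") (simp_all add: field_simps power2_eq_square)
qed

lemma xi1_eq_on_P6:
  assumes "p \<in> P6 a b"
  shows "xi1 a b \<epsilon>0 \<epsilon>1 0 p = (omega \<epsilon>1 p)\<^sup>2 + cx1 p * cnj (N_factor \<epsilon>0 \<epsilon>1 p)"
proof -
  obtain M \<alpha> \<beta> where p: "p = (M, \<alpha>, \<beta>)" by (cases p)
  have "rsq a b = (\<alpha>$1)\<^sup>2 + (\<alpha>$2)\<^sup>2 + (\<alpha>$3)\<^sup>2 - (\<beta>$1)\<^sup>2 - (\<beta>$2)\<^sup>2 - (\<beta>$3)\<^sup>2"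
    and "\<alpha>$1 * \<beta>$1 + \<alpha>$2 * \<beta>$2 + \<alpha>$3 * \<beta>$3 = 0"
    using assms by (auto simp: p P6_def rsq_def inner_vec_def sum_3 power2_eq_square)
  then show ?thesis
    by (simp add: p xi1_def omega_def N_factor_def cx1_def cy1_def cz1_def cw1_def cw3_def complex_eq_iff
        power2_eq_square algebra_simps) algebra
qed

lemma F_numer_eq_on_P6:
  assumes "p \<in> P6 a b"
  shows "F_numer a b \<epsilon>1 p = (fst p $ 3 - 2 * \<epsilon>1 * Im (cy1 p)) * (cmod (cx1 p))\<^sup>2
                            - 2 * Re (omega \<epsilon>1 p * cnj (cx1 p) * cz1 p)"
proof -
  obtain M \<alpha> \<beta> where p: "p = (M, \<alpha>, \<beta>)" by (cases p)
  have r: "rsq a b = (\<alpha>$1)\<^sup>2 + (\<alpha>$2)\<^sup>2 + (\<alpha>$3)\<^sup>2 - (\<beta>$1)\<^sup>2 - (\<beta>$2)\<^sup>2 - (\<beta>$3)\<^sup>2"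
    and ab: "\<alpha>$1 * \<beta>$1 + \<alpha>$2 * \<beta>$2 + \<alpha>$3 * \<beta>$3 = 0"
    using assms by (auto simp: p P6_def rsq_def inner_vec_def sum_3 power2_eq_square)
  have "F_numer a b \<epsilon>1 p = (fst p $ 3 - 2 * \<epsilon>1 * Im (cy1 p)) * (cmod (cx1 p))\<^sup>2
      - 2 * Re (omega \<epsilon>1 p * cnj (cx1 p) * cz1 p) - 4 * \<epsilon>1 * Re (cx1 p) * (\<alpha>$1 * \<beta>$1 + \<alpha>$2 * \<beta>$2 + \<alpha>$3 * \<beta>$3)"
    unfolding cmod_power2
    by (simp add: p r F_numer_def omega_def cx1_def cx2_def cy1_def cz1_def cz2_def cw1_def cw2_def cw3_def
        power2_eq_square field_simps)
  then show ?thesis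
    by (simp add: ab)
qed

lemma xi_bracket_eq:
  "xi_bracket \<epsilon>0 \<epsilon>1 p =
     2 * Re (cnj (N_factor \<epsilon>0 \<epsilon>1 p) * cnj (omega \<epsilon>1 p) * cz1 p)
     - 2 * \<epsilon>1\<^sup>2 * Re (omega \<epsilon>1 p * cnj (cx1 p) * cz1 p)
     + (fst p $ 3 - 2 * \<epsilon>1 * Im (cy1 p)) * (cmod (omega \<epsilon>1 p))\<^sup>2
     - \<epsilon>1\<^sup>2 * fst p $ 3 * (cmod (cx1 p))\<^sup>2
     + 2 * \<epsilon>1 * Im (cnj (cx1 p) * (omega \<epsilon>1 p)\<^sup>2)"
proof -
  obtain M \<alpha> \<beta> where p: "p = (M, \<alpha>, \<beta>)" by (cases p)
  show ?thesis
    unfolding cmod_power2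
    by (simp add: p xi_bracket_def lie_poisson_def grad_xi_re_def grad_xi_im_def omega_def N_factor_def
      cx1_def cy1_def cz1_def cw1_def cw3_def inner_vec_def sum_3 cross_components power2_eq_square
      field_simps)
qed

lemma omega_sq_eq_on_M1:
  assumes "p \<in> M1set a b \<epsilon>0 \<epsilon>1 0"
  shows "(omega \<epsilon>1 p)\<^sup>2 = - cx1 p * cnj (N_factor \<epsilon>0 \<epsilon>1 p)"
  using assms xi1_eq_on_P6[of p a b \<epsilon>0 \<epsilon>1] by (auto simp: M1set_def add_eq_0_iff)

text \<open>The roles of X, W, Q, Z are played by x1, \<omega>, q and z1; the hypothesis W^2 = - X (cnj Q) is
  the equation of M1.\<close>

lemma complex_bracket_identity:
  fixes X W Q Z :: complex and \<epsilon>1 m D :: real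
  assumes W: "W\<^sup>2 = - X * cnj Q" and Q: "Im Q = \<epsilon>1 * m - \<epsilon>1\<^sup>2 * D"
  shows "(2 * Re (cnj Q * cnj W * Z) - 2 * \<epsilon>1\<^sup>2 * Re (W * cnj X * Z) + (m - 2 * \<epsilon>1 * D) * (cmod W)\<^sup>2
          - \<epsilon>1\<^sup>2 * m * (cmod X)\<^sup>2 + 2 * \<epsilon>1 * Im (cnj X * W\<^sup>2)) * (cmod X)\<^sup>2
       = ((cmod W)\<^sup>2 + \<epsilon>1\<^sup>2 * (cmod X)\<^sup>2) * ((m - 2 * \<epsilon>1 * D) * (cmod X)\<^sup>2 - 2 * Re (W * cnj X * Z))"
proof -
  have XQ: "of_real ((cmod X)\<^sup>2) * cnj Q = - cnj X * W\<^sup>2"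
    unfolding complex_norm_square W by (simp add: algebra_simps)
  have "of_real ((cmod X)\<^sup>2) * (cnj Q * cnj W * Z) = (of_real ((cmod X)\<^sup>2) * cnj Q) * (cnj W * Z)"
    by (simp only: mult_ac)
  also have "\<dots> = - (W * cnj W) * (W * cnj X * Z)"
    unfolding XQ by (simp add: power2_eq_square mult_ac)
  also have "\<dots> = - (of_real ((cmod W)\<^sup>2) * (W * cnj X * Z))"
    unfolding complex_norm_square by simp
  finally have "of_real ((cmod X)\<^sup>2) * (cnj Q * cnj W * Z) = - (of_real ((cmod W)\<^sup>2) * (W * cnj X * Z))" .
  from arg_cong[where f = Re, OF this]
  have R: "(cmod X)\<^sup>2 * Re (cnj Q * cnj W * Z) = - (cmod W)\<^sup>2 * Re (W * cnj X * Z)"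
    by simp
  have I: "Im (cnj X * W\<^sup>2) = (cmod X)\<^sup>2 * Im Q"
    using arg_cong[where f = Im, OF XQ] by simp
  show ?thesis
    using R unfolding I Q by algebra
qed

lemma xi_bracket_mult_norm_sq:
  assumes "p \<in> M1set a b \<epsilon>0 \<epsilon>1 0"
  shows "xi_bracket \<epsilon>0 \<epsilon>1 p * (cmod (cx1 p))\<^sup>2
       = ((cmod (omega \<epsilon>1 p))\<^sup>2 + \<epsilon>1\<^sup>2 * (cmod (cx1 p))\<^sup>2) * F_numer a b \<epsilon>1 p"
proof -
  have P6: "p \<in> P6 a b"
    using assms by (simp add: M1set_def)
  have "Im (N_factor \<epsilon>0 \<epsilon>1 p) = \<epsilon>1 * fst p $ 3 - \<epsilon>1\<^sup>2 * Im (cy1 p)"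
    by (cases p) (simp add: N_factor_def cw3_def power2_eq_square algebra_simps)
  then show ?thesis
    unfolding xi_bracket_eq F_numer_eq_on_P6[OF P6]
    by (rule complex_bracket_identity[OF omega_sq_eq_on_M1[OF assms]])
qed

lemma xi_bracket_on_M1:
  assumes "p \<in> M1set a b \<epsilon>0 \<epsilon>1 0"
  shows "xi_bracket \<epsilon>0 \<epsilon>1 p
       = (cmod (N_factor \<epsilon>0 \<epsilon>1 p) + \<epsilon>1\<^sup>2 * cmod (cx1 p)) * (F_numer a b \<epsilon>1 p / cmod (cx1 p))"
proof (cases "cx1 p = 0")
  case True
  \<comment> \<open>Here F is 0 through division by zero, and the bracket vanishes as well.\<close>
  then have "omega \<epsilon>1 p = 0"
    using omega_sq_eq_on_M1[OF assms] by simp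
  with True show ?thesis
    by (simp add: xi_bracket_eq)
next
  case False
  let ?n = "cmod (cx1 p)"
  have "(cmod (omega \<epsilon>1 p))\<^sup>2 = ?n * cmod (N_factor \<epsilon>0 \<epsilon>1 p)"
    using arg_cong[where f = cmod, OF omega_sq_eq_on_M1[OF assms]] by (simp add: norm_mult norm_power)
  with xi_bracket_mult_norm_sq[OF assms]
  have "?n * (?n * xi_bracket \<epsilon>0 \<epsilon>1 p) = ?n * ((cmod (N_factor \<epsilon>0 \<epsilon>1 p) + \<epsilon>1\<^sup>2 * ?n) * F_numer a b \<epsilon>1 p)"
    by (simp add: algebra_simps power2_eq_square)
  with False have "?n * xi_bracket \<epsilon>0 \<epsilon>1 p = (cmod (N_factor \<epsilon>0 \<epsilon>1 p) + \<epsilon>1\<^sup>2 * ?n) * F_numer a b \<epsilon>1 p"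
    by simp
  with False show ?thesis
    by (simp add: field_simps)
qed

theorem theorem4:
  fixes a b \<epsilon>0 \<epsilon>1 :: real and x :: phase
  assumes "a > b" and "b > 0" and "\<epsilon>0 \<ge> 0"
    and "x \<in> M1set a b \<epsilon>0 \<epsilon>1 0"
  shows "complex_of_real (Cinv (Kfun a b \<epsilon>0 \<epsilon>1 0) x)
           = - 4 * (Nfun \<epsilon>0 \<epsilon>1 0 x)\<^sup>2 * (Ffun a b \<epsilon>1 0 x)\<^sup>2
     \<and> (Nfun \<epsilon>0 \<epsilon>1 0 x * Ffun a b \<epsilon>1 0 x \<noteq> 0 \<longrightarrow> outer_center (Kfun a b \<epsilon>0 \<epsilon>1 0) x)
     \<and> (Nfun \<epsilon>0 \<epsilon>1 0 x * Ffun a b \<epsilon>1 0 x = 0 \<longrightarrow> outer_degenerate (Kfun a b \<epsilon>0 \<epsilon>1 0) x)"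
proof -
  have C: "Cinv (Kfun a b \<epsilon>0 \<epsilon>1 0) x = - 4 * (xi_bracket \<epsilon>0 \<epsilon>1 x)\<^sup>2"
    using assms(4) by (intro Cinv_Kfun_eq) (simp add: M1set_def)
  have NF: "Nfun \<epsilon>0 \<epsilon>1 0 x * Ffun a b \<epsilon>1 0 x = of_real (xi_bracket \<epsilon>0 \<epsilon>1 x)"
    by (simp add: Nfun_eq Ffun_eq xi_bracket_on_M1[OF assms(4)])
  show ?thesis
    using NF by (simp add: C outer_center_def outer_degenerate_def mult.assoc flip: power_mult_distrib)
qed

end
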